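(* Let $X$ be a uniformly convex Banach space and $Y$ any Banach space. Then the pair $(X,Y)$ has the sBPBp for compact operators: for every $\varepsilon>0$ and every compact operator $T\in\mathcal{L}(X,Y)$ with $\|T\|=1$ there exists $\eta=\eta(\varepsilon,T)>0$ such that whenever $x_0\in S_X$ satisfies $\|T(x_0)\|>1-\eta$, there exists $x_1\in S_X$ with $\|T(x_1)\|=1$ and $\|x_1-x_0\|<\varepsilon$.
   Context: All Banach spaces are over $\mathbb{K}=\mathbb{R}$ or $\mathbb{C}$. $S_X$ denotes the unit sphere of $X$ and $\mathcal{L}(X,Y)$ the space of bounded linear operators from $X$ to $Y$ with the operator norm. An operator is compact if the closure of the image of the unit ball is compact. *)

theory Defs
  imports "HOL-Analysis.Analysis"
begin

definition uniformly_convex :: "'a::real_normed_vector itself \<Rightarrow> bool" where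
  "uniformly_convex _ \<longleftrightarrow>
     (\<forall>e>0. \<exists>d>0. \<forall>x y::'a. norm x = 1 \<longrightarrow> norm y = 1 \<longrightarrow> norm (x - y) \<ge> e \<longrightarrow>
        norm ((x + y) /\<^sub>R 2) \<le> 1 - d)"

definition compact_operator :: "('a::real_normed_vector \<Rightarrow> 'b::real_normed_vector) \<Rightarrow> bool" where
  "compact_operator T \<longleftrightarrow> bounded_linear T \<and> compact (closure (T ` cball 0 1))"

end

theory Submission
  imports Defs
begin

text \<open>If the statement failed, there would be unit vectors \<open>x\<^sub>n\<close> with \<open>\<parallel>T x\<^sub>n\<parallel> \<rightarrow> 1\<close> staying
  \<open>e\<close>-far from every norm-attaining unit vector. By compactness of \<open>T\<close> a subsequence has
  \<open>T x\<^sub>n\<close> convergent; then \<open>\<parallel>(x\<^sub>m + x\<^sub>n)/2\<parallel> \<ge> \<parallel>T((x\<^sub>m + x\<^sub>n)/2)\<parallel> \<rightarrow> 1\<close>, so by uniform convexity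
  the subsequence itself is Cauchy. Its limit is a unit vector at which \<open>T\<close> attains its norm,
  contradicting the choice of the \<open>x\<^sub>n\<close>.\<close>

lemma uniformly_convex_Cauchy:
  fixes x :: "nat \<Rightarrow> 'a::real_normed_vector"
  assumes "uniformly_convex TYPE('a)"
    and unit: "\<And>n. norm (x n) = 1"
    and mid: "\<And>d. d > 0 \<Longrightarrow> \<exists>M. \<forall>m\<ge>M. \<forall>n\<ge>M. norm ((x m + x n) /\<^sub>R 2) > 1 - d"
  shows "Cauchy x"
proof (rule CauchyI)
  fix \<epsilon> :: real
  assume "\<epsilon> > 0"
  then obtain d where "d > 0" and convex: "\<And>u v::'a. norm u = 1 \<Longrightarrow> norm v = 1 \<Longrightarrow>
      norm (u - v) \<ge> \<epsilon> \<Longrightarrow> norm ((u + v) /\<^sub>R 2) \<le> 1 - d"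
    using assms(1) unfolding uniformly_convex_def by metis
  then obtain M where "\<forall>m\<ge>M. \<forall>n\<ge>M. norm ((x m + x n) /\<^sub>R 2) > 1 - d"
    using mid by blast
  then have "\<forall>m\<ge>M. \<forall>n\<ge>M. norm (x m - x n) < \<epsilon>"
    using convex unit by (meson not_le)
  then show "\<exists>M. \<forall>m\<ge>M. \<forall>n\<ge>M. norm (x m - x n) < \<epsilon>" ..
qed

lemma contraction_norming_sequence_Cauchy:
  fixes T :: "'a::real_normed_vector \<Rightarrow> 'b::real_normed_vector" and x :: "nat \<Rightarrow> 'a"
  assumes "uniformly_convex TYPE('a)" and "bounded_linear T"
    and contraction: "\<And>v. norm (T v) \<le> norm v"
    and unit: "\<And>n. norm (x n) = 1"
    and Cauchy_image: "Cauchy (\<lambda>n. T (x n))"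
    and norming: "(\<lambda>n. norm (T (x n))) \<longlonglongrightarrow> 1"
  shows "Cauchy x"
  using assms(1) unit
proof (rule uniformly_convex_Cauchy)
  fix d :: real
  assume "d > 0"
  obtain M1 where M1: "\<forall>m\<ge>M1. \<forall>n\<ge>M1. norm (T (x m) - T (x n)) < d/2"
    using CauchyD[OF Cauchy_image, of "d/2"] \<open>d > 0\<close> by auto
  obtain M2 where M2: "\<forall>n\<ge>M2. norm (norm (T (x n)) - 1) < d/2"
    using LIMSEQ_D[OF norming, of "d/2"] \<open>d > 0\<close> by auto
  have "norm ((x m + x n) /\<^sub>R 2) > 1 - d" if "m \<ge> max M1 M2" "n \<ge> max M1 M2" for m n
  proof -
    have "2 * norm (T (x m)) \<le> norm (T (x m) + T (x n)) + norm (T (x m) - T (x n))"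
      using norm_triangle_ineq[of "T (x m) + T (x n)" "T (x m) - T (x n)"]
      by (simp add: algebra_simps scaleR_2[symmetric])
    moreover have "norm (T (x m) + T (x n)) = 2 * norm (T ((x m + x n) /\<^sub>R 2))"
      using \<open>bounded_linear T\<close> by (simp add: linear_simps)
    moreover have "norm (T (x m) - T (x n)) < d/2"
      using M1 that by simp
    moreover have "\<bar>norm (T (x m)) - 1\<bar> < d/2"
      using M2 that by simp
    ultimately show ?thesis
      using contraction[of "(x m + x n) /\<^sub>R 2"] by linarith
  qed
  then show "\<exists>M. \<forall>m\<ge>M. \<forall>n\<ge>M. norm ((x m + x n) /\<^sub>R 2) > 1 - d"
    by blast
qed

lemma compact_operator_convergent_subseq:
  fixes x :: "nat \<Rightarrow> 'a::real_normed_vector" and T :: "'a \<Rightarrow> 'b::real_normed_vector"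
  assumes "compact_operator T" and "\<And>n. x n \<in> cball 0 1"
  shows "\<exists>r y. strict_mono r \<and> ((\<lambda>n. T (x n)) \<circ> r) \<longlonglongrightarrow> y"
proof -
  have "seq_compact (closure (T ` cball 0 1))"
    using assms(1) compact_imp_seq_compact unfolding compact_operator_def by blast
  moreover have "\<forall>n. T (x n) \<in> closure (T ` cball 0 1)"
    using assms(2) by (auto intro: closure_subset[THEN subsetD])
  ultimately obtain y r where "y \<in> closure (T ` cball 0 1)" "strict_mono r"
      "((\<lambda>n. T (x n)) \<circ> r) \<longlonglongrightarrow> y"
    by (rule seq_compactE)
  then show ?thesis
    by blast
qed

lemma norming_sequence_subseq_converges:
  fixes T :: "'a::banach \<Rightarrow> 'b::real_normed_vector" and x :: "nat \<Rightarrow> 'a"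
  assumes "uniformly_convex TYPE('a)" and "compact_operator T"
    and contraction: "\<And>v. norm (T v) \<le> norm v"
    and unit: "\<And>n. norm (x n) = 1"
    and norming: "(\<lambda>n. norm (T (x n))) \<longlonglongrightarrow> 1"
  obtains r l where "strict_mono r" "(x \<circ> r) \<longlonglongrightarrow> l" "norm l = 1" "norm (T l) = 1"
proof -
  have "bounded_linear T"
    using assms(2) unfolding compact_operator_def by blast
  have "\<And>n. x n \<in> cball 0 1"
    by (simp add: unit)
  then obtain r y where r: "strict_mono r" and "((\<lambda>n. T (x n)) \<circ> r) \<longlonglongrightarrow> y"
    using compact_operator_convergent_subseq[OF assms(2)] by blast
  then have "Cauchy (\<lambda>n. T ((x \<circ> r) n))"
    by (simp add: o_def LIMSEQ_imp_Cauchy)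
  moreover have norming_subseq: "(\<lambda>n. norm (T ((x \<circ> r) n))) \<longlonglongrightarrow> 1"
    using LIMSEQ_subseq_LIMSEQ[OF norming r] by (simp add: o_def)
  ultimately have "Cauchy (x \<circ> r)"
    using contraction_norming_sequence_Cauchy[OF assms(1) \<open>bounded_linear T\<close> contraction]
    by (simp add: unit)
  then obtain l where lim: "(x \<circ> r) \<longlonglongrightarrow> l"
    using Cauchy_convergent_iff convergent_def by blast
  have "(\<lambda>n. norm ((x \<circ> r) n)) \<longlonglongrightarrow> norm l"
    using tendsto_norm[OF lim] .
  then have "norm l = 1"
    by (simp add: unit LIMSEQ_const_iff)
  moreover have "(\<lambda>n. norm (T ((x \<circ> r) n))) \<longlonglongrightarrow> norm (T l)"
    using tendsto_norm[OF bounded_linear.tendsto[OF \<open>bounded_linear T\<close> lim]] .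
  then have "norm (T l) = 1"
    using LIMSEQ_unique[OF _ norming_subseq] by blast
  ultimately show thesis
    by (rule that[OF r lim])
qed

lemma threshold_from_maximizing_sequences:
  fixes f :: "'a \<Rightarrow> real"
  assumes le_one: "\<And>x. x \<in> S \<Longrightarrow> f x \<le> 1"
    and seq: "\<And>x. (\<And>n. x n \<in> S) \<Longrightarrow> (\<lambda>n. f (x n)) \<longlonglongrightarrow> 1 \<Longrightarrow> \<exists>n. P (x n)"
  shows "\<exists>\<eta>>0. \<forall>x\<in>S. f x > 1 - \<eta> \<longrightarrow> P x"
proof (rule ccontr)
  assume contra: "\<not> ?thesis"
  have "\<forall>n. \<exists>x\<in>S. f x > 1 - inverse (real (Suc n)) \<and> \<not> P x"
  proof
    fix n
    have "inverse (real (Suc n)) > 0"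
      by simp
    then show "\<exists>x\<in>S. f x > 1 - inverse (real (Suc n)) \<and> \<not> P x"
      using contra by blast
  qed
  then obtain x where in_S: "\<And>n. x n \<in> S"
    and large: "\<And>n. f (x n) > 1 - inverse (real (Suc n))" and not_P: "\<And>n. \<not> P (x n)"
    by metis
  have "(\<lambda>n. f (x n)) \<longlonglongrightarrow> 1"
  proof (rule tendsto_sandwich[of "\<lambda>n. 1 - inverse (real (Suc n))" _ _ "\<lambda>n. 1"])
    show "\<forall>\<^sub>F n in sequentially. 1 - inverse (real (Suc n)) \<le> f (x n)"
      using large by (intro always_eventually allI less_imp_le) simp
    show "\<forall>\<^sub>F n in sequentially. f (x n) \<le> 1"
      using le_one in_S by (intro always_eventually allI) simp
    show "(\<lambda>n. 1 - inverse (real (Suc n))) \<longlonglongrightarrow> 1"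
      using tendsto_diff[OF tendsto_const LIMSEQ_inverse_real_of_nat, of 1] by simp
  qed simp
  then show False
    using seq[of x] in_S not_P by blast
qed

theorem mainTheorem2:
  fixes T :: "'a::banach \<Rightarrow> 'b::banach" and e :: real
  assumes "uniformly_convex TYPE('a)"
    and "compact_operator T"
    and "onorm T = 1"
    and "e > 0"
  shows "\<exists>\<eta>>0. \<forall>x0\<in>sphere 0 1. norm (T x0) > 1 - \<eta> \<longrightarrow>
           (\<exists>x1\<in>sphere 0 1. norm (T x1) = 1 \<and> norm (x1 - x0) < e)"
proof -
  have "bounded_linear T"
    using assms(2) unfolding compact_operator_def by blast
  then have contraction: "\<And>v. norm (T v) \<le> norm v"
    using onorm(1) assms(3) by fastforce
  show ?thesis
  proof (rule threshold_from_maximizing_sequences)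
    show "norm (T x) \<le> 1" if "x \<in> sphere 0 1" for x
      using contraction[of x] that by simp
    fix x :: "nat \<Rightarrow> 'a"
    assume "\<And>n. x n \<in> sphere 0 1" and norming: "(\<lambda>n. norm (T (x n))) \<longlonglongrightarrow> 1"
    then have "\<And>n. norm (x n) = 1"
      by simp
    then obtain r l where lim: "(x \<circ> r) \<longlonglongrightarrow> l" and "norm l = 1" "norm (T l) = 1"
      using norming_sequence_subseq_converges[OF assms(1,2) contraction, of x] norming by blast
    obtain N where "\<forall>n\<ge>N. norm ((x \<circ> r) n - l) < e"
      using LIMSEQ_D[OF lim assms(4)] by blast
    then have "norm (l - x (r N)) < e"
      by (simp add: norm_minus_commute)
    then show "\<exists>n. \<exists>x1\<in>sphere 0 1. norm (T x1) = 1 \<and> norm (x1 - x n) < e"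
      using \<open>norm l = 1\<close> \<open>norm (T l) = 1\<close> by (intro exI[of _ "r N"] bexI[of _ l]) auto
  qed
qed

end
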